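(* Let $(\mathbf A,\perp,\{\mathsf{t},\mathsf{f}\})$ be an $\mathfrak{N}_w^1$-model with $|A|>1$. Then the Dedekind–MacNeille completion $\mathbb{DM}(\mathcal{I}(\mathbf A))=(\mathrm{DM}(\mathcal{I}(\mathbf A)),\land,\lor,{}^{*},\emptyset,A)$ of the poset with antitone involution $\mathcal{I}(\mathbf A)=(A,\precsim,{}^{*})$ is not an orthomodular lattice.
   Context: A weak $\mathcal{N}$-algebra is an algebra $(A,\otimes,\circ,{}^{*})$ of type $(2,2,1)$ with $\otimes,\circ$ commutative, $x^{**}=x$, and $(x\otimes y)\circ z=(x\otimes z)\circ y$. Term operations: $x\Rightarrow y:=(x\circ y^{*})^{*}$, $x\Leftrightarrow y:=(x\Rightarrow y)\otimes(y\Rightarrow x)$, $x\not\Leftrightarrow y:=(x\Leftrightarrow y)^{*}$, $x\not\Leftrightarrow y\not\Leftrightarrow z:=((x\not\Leftrightarrow y)\otimes(x\not\Leftrightarrow z))\otimes(y\not\Leftrightarrow z)$, $x\oplus y:=(x^{*}\otimes y^{*})^{*}$. With $\mathsf{t}\ne\mathsf{f}$ symbols not in $A$, $\overline A=A\cup\{\mathsf{t},\mathsf{f}\}$, an $\mathfrak{N}_w$-model is $(\mathbf A,\perp,\{\mathsf{t},\mathsf{f}\})$, $\mathbf A$ a weak $\mathcal{N}$-algebra, $\perp\subseteq\overline A\times\overline A$, such that for all $x,y,z\in A$: (a) $x\perp x^{*}$; (b) $x\perp y^{*}$ and $y\perp x^{*}$ imply $x=y$; (c) $x\perp y$ iff $x\circ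 y\perp\mathsf{t}$; (d) $x\perp\mathsf{t}$ iff $x^{*}\perp\mathsf{f}$; (e) $x\perp\mathsf{f}$ and $y\perp\mathsf{f}$ iff $x\otimes y\perp\mathsf{f}$; (f) $(x\circ y^{*})^{*}\perp(x\circ y)^{*}$; (g) $x\perp y$ and $x\perp\mathsf{f}$ imply $y\perp\mathsf{t}$; (h) $(x\not\Leftrightarrow y\not\Leftrightarrow z)\perp((x\Rightarrow y)\Rightarrow((y\Rightarrow z)\Rightarrow(x\Rightarrow z)))^{*}$. An $\mathfrak{N}_w^1$-model is an $\mathfrak{N}_w$-model such that for all $x,y,z\in A$: $x\perp\mathsf{f}$ implies $x\oplus y\perp\mathsf{f}$; and $x\perp y^{*}$, $y\perp z^{*}$ imply $x\perp z^{*}$. On $A$, $x\precsim y$ iff $x\perp y^{*}$; $(A,\precsim,{}^{*})$ is a poset with antitone involution. For $X\subseteq A$: $L(X)=\{y: y\precsim x\ \forall x\in X\}$, $U(X)=\{y: x\precsim y\ \forall x\in X\}$, $X'=\{x^{*}:x\in X\}$. $\mathrm{DM}(\mathcal{I}(\mathbf A))=\{X\subseteq A: L(U(X))=X\}$, ordered by inclusion, with $X\land Y=X\cap Y$, $X\lor Y=L(U(X\cup Y))$, $X^{*}=L(X')$, bottom $\emptyset$ and top $A$. An ortholattice $(B,\land,\lor,{}^{*},0,1)$ is orthomodular if $x\le y$ and $x^{*}\land y=0$ imply $x=y$. *)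

theory Defs
  imports Main
begin

text \<open>The carrier A of the weak N-algebra is the whole type 'a.
  The extended carrier A \<union> {t, f} is the type 'a ext.\<close>

datatype 'a ext = El 'a | Tv | Fv

definition weak_N_algebra ::
  "('a \<Rightarrow> 'a \<Rightarrow> 'a) \<Rightarrow> ('a \<Rightarrow> 'a \<Rightarrow> 'a) \<Rightarrow> ('a \<Rightarrow> 'a) \<Rightarrow> bool" where
  "weak_N_algebra ot ci st \<longleftrightarrow>
     (\<forall>x y. ot x y = ot y x) \<and> (\<forall>x y. ci x y = ci y x) \<and> (\<forall>x. st (st x) = x) \<and>
     (\<forall>x y z. ci (ot x y) z = ci (ot x z) y)"

definition imp_op :: "('a \<Rightarrow> 'a \<Rightarrow> 'a) \<Rightarrow> ('a \<Rightarrow> 'a) \<Rightarrow> 'a \<Rightarrow> 'a \<Rightarrow> 'a" where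
  "imp_op ci st x y = st (ci x (st y))"

definition iff_op :: "('a \<Rightarrow> 'a \<Rightarrow> 'a) \<Rightarrow> ('a \<Rightarrow> 'a \<Rightarrow> 'a) \<Rightarrow> ('a \<Rightarrow> 'a) \<Rightarrow> 'a \<Rightarrow> 'a \<Rightarrow> 'a" where
  "iff_op ot ci st x y = ot (imp_op ci st x y) (imp_op ci st y x)"

definition niff_op :: "('a \<Rightarrow> 'a \<Rightarrow> 'a) \<Rightarrow> ('a \<Rightarrow> 'a \<Rightarrow> 'a) \<Rightarrow> ('a \<Rightarrow> 'a) \<Rightarrow> 'a \<Rightarrow> 'a \<Rightarrow> 'a" where
  "niff_op ot ci st x y = st (iff_op ot ci st x y)"

definition niff3_op :: "('a \<Rightarrow> 'a \<Rightarrow> 'a) \<Rightarrow> ('a \<Rightarrow> 'a \<Rightarrow> 'a) \<Rightarrow> ('a \<Rightarrow> 'a) \<Rightarrow> 'a \<Rightarrow> 'a \<Rightarrow> 'a \<Rightarrow> 'a" where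
  "niff3_op ot ci st x y z =
     ot (ot (niff_op ot ci st x y) (niff_op ot ci st x z)) (niff_op ot ci st y z)"

definition oplus_op :: "('a \<Rightarrow> 'a \<Rightarrow> 'a) \<Rightarrow> ('a \<Rightarrow> 'a) \<Rightarrow> 'a \<Rightarrow> 'a \<Rightarrow> 'a" where
  "oplus_op ot st x y = st (ot (st x) (st y))"

definition Nw_model ::
  "('a \<Rightarrow> 'a \<Rightarrow> 'a) \<Rightarrow> ('a \<Rightarrow> 'a \<Rightarrow> 'a) \<Rightarrow> ('a \<Rightarrow> 'a) \<Rightarrow> ('a ext \<Rightarrow> 'a ext \<Rightarrow> bool) \<Rightarrow> bool" where
  "Nw_model ot ci st perp \<longleftrightarrow> weak_N_algebra ot ci st \<and>
     (\<forall>x. perp (El x) (El (st x))) \<and>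
     (\<forall>x y. perp (El x) (El (st y)) \<and> perp (El y) (El (st x)) \<longrightarrow> x = y) \<and>
     (\<forall>x y. perp (El x) (El y) \<longleftrightarrow> perp (El (ci x y)) Tv) \<and>
     (\<forall>x. perp (El x) Tv \<longleftrightarrow> perp (El (st x)) Fv) \<and>
     (\<forall>x y. (perp (El x) Fv \<and> perp (El y) Fv) \<longleftrightarrow> perp (El (ot x y)) Fv) \<and>
     (\<forall>x y. perp (El (st (ci x (st y)))) (El (st (ci x y)))) \<and>
     (\<forall>x y. perp (El x) (El y) \<and> perp (El x) Fv \<longrightarrow> perp (El y) Tv) \<and>
     (\<forall>x y z. perp (El (niff3_op ot ci st x y z))
        (El (st (imp_op ci st (imp_op ci st x y)
                   (imp_op ci st (imp_op ci st y z) (imp_op ci st x z))))))"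

definition Nw1_model ::
  "('a \<Rightarrow> 'a \<Rightarrow> 'a) \<Rightarrow> ('a \<Rightarrow> 'a \<Rightarrow> 'a) \<Rightarrow> ('a \<Rightarrow> 'a) \<Rightarrow> ('a ext \<Rightarrow> 'a ext \<Rightarrow> bool) \<Rightarrow> bool" where
  "Nw1_model ot ci st perp \<longleftrightarrow> Nw_model ot ci st perp \<and>
     (\<forall>x y. perp (El x) Fv \<longrightarrow> perp (El (oplus_op ot st x y)) Fv) \<and>
     (\<forall>x y z. perp (El x) (El (st y)) \<and> perp (El y) (El (st z)) \<longrightarrow> perp (El x) (El (st z)))"

definition prec :: "('a \<Rightarrow> 'a) \<Rightarrow> ('a ext \<Rightarrow> 'a ext \<Rightarrow> bool) \<Rightarrow> 'a \<Rightarrow> 'a \<Rightarrow> bool" where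
  "prec st perp x y \<longleftrightarrow> perp (El x) (El (st y))"

definition lowb :: "('a \<Rightarrow> 'a \<Rightarrow> bool) \<Rightarrow> 'a set \<Rightarrow> 'a set" where
  "lowb le X = {y. \<forall>x\<in>X. le y x}"

definition uppb :: "('a \<Rightarrow> 'a \<Rightarrow> bool) \<Rightarrow> 'a set \<Rightarrow> 'a set" where
  "uppb le X = {y. \<forall>x\<in>X. le x y}"

definition DM_sets :: "('a \<Rightarrow> 'a \<Rightarrow> bool) \<Rightarrow> 'a set set" where
  "DM_sets le = {X. lowb le (uppb le X) = X}"

definition DM_join :: "('a \<Rightarrow> 'a \<Rightarrow> bool) \<Rightarrow> 'a set \<Rightarrow> 'a set \<Rightarrow> 'a set" where
  "DM_join le X Y = lowb le (uppb le (X \<union> Y))"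

definition DM_compl :: "('a \<Rightarrow> 'a \<Rightarrow> bool) \<Rightarrow> ('a \<Rightarrow> 'a) \<Rightarrow> 'a set \<Rightarrow> 'a set" where
  "DM_compl le st X = lowb le (st ` X)"

definition ortholattice ::
  "'b set \<Rightarrow> ('b \<Rightarrow> 'b \<Rightarrow> bool) \<Rightarrow> ('b \<Rightarrow> 'b \<Rightarrow> 'b) \<Rightarrow> ('b \<Rightarrow> 'b \<Rightarrow> 'b) \<Rightarrow> ('b \<Rightarrow> 'b)
    \<Rightarrow> 'b \<Rightarrow> 'b \<Rightarrow> bool" where
  "ortholattice B le meet join compl zr on \<longleftrightarrow>
     (\<forall>x\<in>B. le x x) \<and>
     (\<forall>x\<in>B. \<forall>y\<in>B. le x y \<and> le y x \<longrightarrow> x = y) \<and>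
     (\<forall>x\<in>B. \<forall>y\<in>B. \<forall>z\<in>B. le x y \<and> le y z \<longrightarrow> le x z) \<and>
     zr \<in> B \<and> on \<in> B \<and> (\<forall>x\<in>B. le zr x \<and> le x on) \<and>
     (\<forall>x\<in>B. \<forall>y\<in>B. meet x y \<in> B \<and> join x y \<in> B) \<and>
     (\<forall>x\<in>B. \<forall>y\<in>B. le (meet x y) x \<and> le (meet x y) y \<and>
        (\<forall>z\<in>B. le z x \<and> le z y \<longrightarrow> le z (meet x y))) \<and>
     (\<forall>x\<in>B. \<forall>y\<in>B. le x (join x y) \<and> le y (join x y) \<and>
        (\<forall>z\<in>B. le x z \<and> le y z \<longrightarrow> le (join x y) z)) \<and>
     (\<forall>x\<in>B. compl x \<in> B \<and> compl (compl x) = x \<and>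
        meet x (compl x) = zr \<and> join x (compl x) = on) \<and>
     (\<forall>x\<in>B. \<forall>y\<in>B. le x y \<longrightarrow> le (compl y) (compl x))"

definition orthomodular_lattice ::
  "'b set \<Rightarrow> ('b \<Rightarrow> 'b \<Rightarrow> bool) \<Rightarrow> ('b \<Rightarrow> 'b \<Rightarrow> 'b) \<Rightarrow> ('b \<Rightarrow> 'b \<Rightarrow> 'b) \<Rightarrow> ('b \<Rightarrow> 'b)
    \<Rightarrow> 'b \<Rightarrow> 'b \<Rightarrow> bool" where
  "orthomodular_lattice B le meet join compl zr on \<longleftrightarrow>
     ortholattice B le meet join compl zr on \<and>
     (\<forall>x\<in>B. \<forall>y\<in>B. le x y \<and> meet (compl x) y = zr \<longrightarrow> x = y)"

end

theory Submission
  imports Defs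
begin

text \<open>Let T be the set of elements orthogonal to t, so that x \<precsim> y iff x \<circ> y* \<in> T.
  The axioms of an N_w^1-model make this order degenerate in two ways: whenever
  a \<precsim> b, the elements a* and b have no common lower bound; and, as soon as
  |A| > 1, the order is not symmetric. Principal ideals are closed in the
  Dedekind-MacNeille completion, and a \<precsim> b gives \<down>a \<subseteq> \<down>b with (\<down>a)* \<inter> \<down>b = \<emptyset>.
  Orthomodularity would then force \<down>a = \<down>b, i.e. b \<precsim> a, for all a \<precsim> b.\<close>

lemma lowb_singleton_in_DM_sets: "lowb le {a} \<in> DM_sets le"
  unfolding DM_sets_def lowb_def uppb_def by blast

lemma orthomodular_DM_principal_ideals:
  assumes OML: "orthomodular_lattice (DM_sets le) (\<subseteq>) (\<inter>) (DM_join le) (DM_compl le st) {} UNIV"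
    and refl: "\<And>x. le x x" and trans: "\<And>x y z. le x y \<Longrightarrow> le y z \<Longrightarrow> le x z"
    and "le a b" and no_lower_bound: "\<And>c. le c (st a) \<Longrightarrow> le c b \<Longrightarrow> False"
  shows "le b a"
proof -
  have "le c (st a)" if "c \<in> DM_compl le st (lowb le {a})" for c
    using that refl[of a] unfolding DM_compl_def lowb_def by simp
  then have "DM_compl le st (lowb le {a}) \<inter> lowb le {b} = {}"
    using no_lower_bound unfolding lowb_def by blast
  moreover have "lowb le {a} \<subseteq> lowb le {b}"
    using \<open>le a b\<close> trans unfolding lowb_def by blast
  ultimately have "lowb le {a} = lowb le {b}"
    using OML[unfolded orthomodular_lattice_def, THEN conjunct2, rule_format,
        OF lowb_singleton_in_DM_sets lowb_singleton_in_DM_sets] by blast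
  then show "le b a"
    using refl unfolding lowb_def by blast
qed

text \<open>With T the set of elements orthogonal to t, x \<perp> y reads x \<circ> y \<in> T and x \<perp> f
  reads x* \<in> T. The assumptions are the N_w^1 axioms used below, rewritten in this way.\<close>

locale Nw1_truth_frame =
  fixes ot ci :: "'a \<Rightarrow> 'a \<Rightarrow> 'a" and st :: "'a \<Rightarrow> 'a" and T :: "'a set"
  assumes ot_commute: "ot x y = ot y x"
    and ci_commute: "ci x y = ci y x"
    and st_st [simp]: "st (st x) = x"
    and ci_ot_swap: "ci (ot x y) z = ci (ot x z) y"
    and ci_st_self: "ci x (st x) \<in> T"
    and ci_antisym: "ci x (st y) \<in> T \<Longrightarrow> ci y (st x) \<in> T \<Longrightarrow> x = y"
    and st_ot_true: "st x \<in> T \<Longrightarrow> st y \<in> T \<Longrightarrow> st (ot x y) \<in> T"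
    and ci_st_ci: "ci (st (ci x (st y))) (st (ci x y)) \<in> T"
    and true_by_ci: "st x \<in> T \<Longrightarrow> ci x y \<in> T \<Longrightarrow> y \<in> T"
    and ot_true: "x \<in> T \<Longrightarrow> ot x y \<in> T"
    and ci_st_trans: "ci x (st y) \<in> T \<Longrightarrow> ci y (st z) \<in> T \<Longrightarrow> ci x (st z) \<in> T"
begin

definition leq :: "'a \<Rightarrow> 'a \<Rightarrow> bool" where
  "leq x y \<longleftrightarrow> ci x (st y) \<in> T"

lemma leq_refl: "leq x x"
  unfolding leq_def by (rule ci_st_self)

lemma leq_trans: "leq x y \<Longrightarrow> leq y z \<Longrightarrow> leq x z"
  unfolding leq_def by (rule ci_st_trans)

lemma leq_antisym: "leq x y \<Longrightarrow> leq y x \<Longrightarrow> x = y"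
  unfolding leq_def by (rule ci_antisym)

lemma leq_st_iff: "leq x (st y) \<longleftrightarrow> ci x y \<in> T"
  unfolding leq_def by simp

lemma leq_ci_trans: "leq x y \<Longrightarrow> ci y z \<in> T \<Longrightarrow> ci x z \<in> T"
  using leq_trans[of x y "st z"] by (simp add: leq_st_iff)

lemma ci_ot_left_commute: "ci x (ot y z) = ci y (ot x z)"
  by (metis ci_ot_swap ci_commute ot_commute)

lemma ci_ot_st_ot: "ci x (ot y (st (ot x y))) \<in> T"
proof -
  have "ci (ot y x) (st (ot x y)) \<in> T"
    using ci_st_self[of "ot x y"] by (simp add: ot_commute)
  then show ?thesis
    using ci_ot_swap[of y x "st (ot x y)"] ci_commute[of x "ot y (st (ot x y))"] by simp
qed

lemma true_lower_bound: "\<exists>z\<in>T. leq z y"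
proof -
  define t where "t = ci y (st y)"
  have "t \<in> T"
    unfolding t_def by (rule ci_st_self)
  then have "ot t (st (ot t (st y))) \<in> T"
    by (rule ot_true)
  moreover have "leq (ot t (st (ot t (st y)))) y"
    using ci_ot_st_ot[of "st y" t] by (simp add: leq_def ci_commute ot_commute)
  ultimately show ?thesis
    by blast
qed

lemma all_true_if_true_and_false:
  assumes "d \<in> T" and "st d \<in> T"
  shows "y \<in> T"
proof -
  have "st (ot d (st (ot d y))) \<in> T"
    using st_ot_true[OF \<open>st d \<in> T\<close>] ot_true[OF \<open>d \<in> T\<close>] by simp
  moreover have "ci (ot d (st (ot d y))) y \<in> T"
    using ci_st_self[of "ot d y"] by (simp add: ci_ot_swap)
  ultimately show "y \<in> T"
    by (rule true_by_ci)
qed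

lemma st_ci_st_true: "ci x y \<in> T \<Longrightarrow> st (ci x (st y)) \<in> T"
  using true_by_ci[of "st (ci x y)"] ci_st_ci[of x "st y"] by simp

end

locale nontrivial_Nw1_truth_frame = Nw1_truth_frame +
  assumes nontrivial: "\<exists>u v :: 'a. u \<noteq> v"
begin

lemma true_not_false: "x \<in> T \<Longrightarrow> st x \<notin> T"
  using all_true_if_true_and_false ci_antisym nontrivial by blast

lemma no_lower_bound_st: "leq c x \<Longrightarrow> leq c (st x) \<Longrightarrow> False"
  using st_ci_st_true true_not_false by (auto simp: leq_def)

lemma no_common_lower_bound:
  assumes "leq a b" and "leq c (st a)" and "leq c b"
  shows False
proof -
  define e where "e = ot a (st (ot b (st c)))"
  have "leq a (st c)"
    using \<open>leq c (st a)\<close> by (simp add: leq_st_iff ci_commute)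
  then have "ci a (ot b (st (ot b (st c)))) \<in> T"
    using leq_ci_trans ci_ot_st_ot[of "st c" b] ot_commute by metis
  then have "ci b e \<in> T"
    unfolding e_def by (simp add: ci_ot_left_commute)
  with \<open>leq c b\<close> have "leq e (st c)"
    using leq_ci_trans by (simp add: leq_st_iff ci_commute)
  have "ci a (ot (st c) (st (ot b (st c)))) \<in> T"
    using leq_ci_trans[OF \<open>leq a b\<close> ci_ot_st_ot[of b "st c"]] .
  then have "leq e c"
    unfolding e_def leq_def by (simp add: ci_ot_left_commute ci_commute)
  then show False
    using \<open>leq e (st c)\<close> by (rule no_lower_bound_st)
qed

lemma leq_not_symmetric:
  obtains a b where "leq a b" and "\<not> leq b a"
proof (rule ccontr)
  assume "\<not> thesis"
  with that have sym: "leq a b \<Longrightarrow> leq b a" for a b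
    by blast
  have all_true: "y \<in> T" for y
    using true_lower_bound[of y] sym leq_antisym by blast
  show False
    using true_not_false all_true by blast
qed

end

lemma Nw1_model_truth_frame:
  assumes "Nw1_model ot ci st perp"
  shows "Nw1_truth_frame ot ci st {x. perp (El x) Tv}" (is "Nw1_truth_frame _ _ _ ?T")
proof -
  obtain alg: "weak_N_algebra ot ci st"
    and perp_st: "\<forall>x. perp (El x) (El (st x))"
    and perp_antisym: "\<forall>x y. perp (El x) (El (st y)) \<and> perp (El y) (El (st x)) \<longrightarrow> x = y"
    and perp_El: "\<forall>x y. perp (El x) (El y) \<longleftrightarrow> perp (El (ci x y)) Tv"
    and perp_Tv: "\<forall>x. perp (El x) Tv \<longleftrightarrow> perp (El (st x)) Fv"
    and perp_ot_Fv: "\<forall>x y. (perp (El x) Fv \<and> perp (El y) Fv) \<longleftrightarrow> perp (El (ot x y)) Fv"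
    and perp_ci: "\<forall>x y. perp (El (st (ci x (st y)))) (El (st (ci x y)))"
    and perp_Fv_Tv: "\<forall>x y. perp (El x) (El y) \<and> perp (El x) Fv \<longrightarrow> perp (El y) Tv"
    and perp_oplus: "\<forall>x y. perp (El x) Fv \<longrightarrow> perp (El (oplus_op ot st x y)) Fv"
    and perp_trans: "\<forall>x y z. perp (El x) (El (st y)) \<and> perp (El y) (El (st z)) \<longrightarrow> perp (El x) (El (st z))"
    using assms unfolding Nw1_model_def Nw_model_def by (elim conjE)
  have st_st: "st (st x) = x" for x
    using alg unfolding weak_N_algebra_def by blast
  have perp_El_iff: "perp (El x) (El y) \<longleftrightarrow> ci x y \<in> ?T" for x y
    using perp_El by simp
  have perp_Fv_iff: "perp (El x) Fv \<longleftrightarrow> st x \<in> ?T" for x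
    using perp_Tv st_st by (metis mem_Collect_eq)
  show ?thesis
  proof unfold_locales
    fix x y z
    show "ot x y = ot y x" "ci x y = ci y x" "st (st x) = x" "ci (ot x y) z = ci (ot x z) y"
      using alg unfolding weak_N_algebra_def by blast+
    show "ci x (st x) \<in> ?T"
      using perp_st perp_El_iff by blast
    show "ci x (st y) \<in> ?T \<Longrightarrow> ci y (st x) \<in> ?T \<Longrightarrow> x = y"
      using perp_antisym perp_El_iff by blast
    show "st x \<in> ?T \<Longrightarrow> st y \<in> ?T \<Longrightarrow> st (ot x y) \<in> ?T"
      using perp_ot_Fv perp_Fv_iff by blast
    show "ci (st (ci x (st y))) (st (ci x y)) \<in> ?T"
      using perp_ci perp_El_iff by blast
    show "st x \<in> ?T \<Longrightarrow> ci x y \<in> ?T \<Longrightarrow> y \<in> ?T"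
      using perp_Fv_Tv perp_El_iff perp_Fv_iff by blast
    show "x \<in> ?T \<Longrightarrow> ot x y \<in> ?T"
      using perp_oplus[rule_format, of "st x" "st y"] perp_Fv_iff[of "st x"] perp_Fv_iff[of "st (ot x y)"]
      by (simp add: oplus_op_def st_st)
    show "ci x (st y) \<in> ?T \<Longrightarrow> ci y (st z) \<in> ?T \<Longrightarrow> ci x (st z) \<in> ?T"
      using perp_trans perp_El_iff by blast
  qed
qed

theorem corollary6p19:
  fixes ot ci :: "'a \<Rightarrow> 'a \<Rightarrow> 'a" and st :: "'a \<Rightarrow> 'a"
    and perp :: "'a ext \<Rightarrow> 'a ext \<Rightarrow> bool"
  assumes "Nw1_model ot ci st perp"
    and "\<exists>x y :: 'a. x \<noteq> y"
  shows "\<not> orthomodular_lattice (DM_sets (prec st perp)) (\<subseteq>) (\<inter>)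
            (DM_join (prec st perp)) (DM_compl (prec st perp) st) {} (UNIV :: 'a set)"
proof
  assume OML: "orthomodular_lattice (DM_sets (prec st perp)) (\<subseteq>) (\<inter>)
            (DM_join (prec st perp)) (DM_compl (prec st perp) st) {} (UNIV :: 'a set)"
  interpret nontrivial_Nw1_truth_frame ot ci st "{x. perp (El x) Tv}"
    using Nw1_model_truth_frame[OF assms(1)] assms(2)
    by (simp add: nontrivial_Nw1_truth_frame_def nontrivial_Nw1_truth_frame_axioms_def)
  have "perp (El x) (El y) \<longleftrightarrow> perp (El (ci x y)) Tv" for x y
    using assms(1) unfolding Nw1_model_def Nw_model_def by blast
  then have prec_eq: "prec st perp = leq"
    unfolding prec_def leq_def by (simp add: fun_eq_iff)
  obtain a b where "leq a b" and "\<not> leq b a"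
    by (rule leq_not_symmetric)
  moreover have "leq b a"
    using orthomodular_DM_principal_ideals[OF OML[unfolded prec_eq]] leq_refl leq_trans
      \<open>leq a b\<close> no_common_lower_bound by blast
  ultimately show False
    by blast
qed

end
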